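(* If $G$ is a topological group and $X$ is a $G^\star$-regular space, then $l^*(X)\le t(C_p(X,G))$.
   Context: All spaces are Tychonoff and non-empty; topological groups are Hausdorff; $e$ is the identity of $G$. $C_p(X,G)$ is the group of continuous maps $X\to G$ with pointwise operations and the topology of pointwise convergence. $X$ is $G^\star$-regular if there exists $g\in G\setminus\{e\}$ such that for every closed $F\subseteq X$ and every $x\in X\setminus F$ there is $f\in C_p(X,G)$ with $f(x)=g$ and $f(F)\subseteq\{e\}$. $t(\cdot)$ denotes tightness, $l(\cdot)$ the Lindel\"of number, and $l^*(X)=\sup\{l(X^n):n\in\mathbb{N}\}$. *)

theory Defs
  imports "HOL-Analysis.Analysis"
begin

definition tychonoff_space :: "'a topology \<Rightarrow> bool" where
  "tychonoff_space X \<longleftrightarrow> completely_regular_space X \<and> Hausdorff_space X \<and> topspace X \<noteq> {}"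

text \<open>The group of continuous maps into the topological group of type 'g, with the
  topology of pointwise convergence (subspace of the product topology).\<close>
definition Cp :: "'a topology \<Rightarrow> ('a \<Rightarrow> 'g::topological_space) topology" where
  "Cp X = subtopology (product_topology (\<lambda>_. euclidean) (topspace X))
            {f. f \<in> extensional (topspace X) \<and> continuous_map X euclidean f}"

text \<open>G-star regularity; the identity of the (additively written) group is 0.\<close>
definition G_star_regular :: "'a topology \<Rightarrow> 'g::topological_group_add itself \<Rightarrow> bool" where
  "G_star_regular X _ \<longleftrightarrow> (\<exists>g::'g. g \<noteq> 0 \<and>
     (\<forall>F x. closedin X F \<and> x \<in> topspace X - F \<longrightarrow>
        (\<exists>f. continuous_map X (euclidean::'g topology) f \<and> f x = g \<and> f ` F \<subseteq> {0})))"

definition tightness_le :: "'a topology \<Rightarrow> 'k set \<Rightarrow> bool" where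
  "tightness_le Y K \<longleftrightarrow> (\<forall>A y. A \<subseteq> topspace Y \<and> y \<in> Y closure_of A \<longrightarrow>
     (\<exists>B. B \<subseteq> A \<and> (card_of B, card_of K) \<in> ordLeq \<and> y \<in> Y closure_of B))"

definition lindelof_le :: "'a topology \<Rightarrow> 'k set \<Rightarrow> bool" where
  "lindelof_le X K \<longleftrightarrow> (\<forall>\<U>. (\<forall>U\<in>\<U>. openin X U) \<and> topspace X \<subseteq> \<Union>\<U> \<longrightarrow>
     (\<exists>\<V>. \<V> \<subseteq> \<U> \<and> (card_of \<V>, card_of K) \<in> ordLeq \<and> topspace X \<subseteq> \<Union>\<V>))"

end

theory Submission
  imports Defs
begin

text \<open>Fix an open cover \<open>\<U>\<close> of \<open>X\<^sup>n\<close> and a value \<open>g \<noteq> 0\<close> witnessing \<open>G\<^sup>\<star>\<close>-regularity.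
  The constant map \<open>g\<close> lies in the closure of the set \<open>A\<close> of those \<open>f \<in> C\<^sub>p(X,G)\<close> for which
  \<open>coz(f)\<^sup>n\<close> is covered by finitely many members of \<open>\<U>\<close>: given a finite \<open>F \<subseteq> X\<close>, cover \<open>F\<^sup>n\<close>
  by finitely many boxes inside members of \<open>\<U>\<close> and add up bumps taking the value \<open>g\<close> at the
  points of \<open>F\<close> and vanishing outside the corresponding sides of the boxes. By tightness \<open>g\<close> is
  in the closure of some \<open>B \<subseteq> A\<close> with \<open>|B| \<le> t(C\<^sub>p(X,G))\<close>. Every \<open>p \<in> X\<^sup>n\<close> yields the
  neighbourhood \<open>{f. \<forall>i. f(p\<^sub>i) \<noteq> 0}\<close> of \<open>g\<close>, so the sets \<open>coz(f)\<^sup>n\<close>, \<open>f \<in> B\<close>, cover \<open>X\<^sup>n\<close>,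
  and so do the \<open>|B|\<close> finite subfamilies of \<open>\<U>\<close> attached to them.\<close>

definition G_star_separating :: "'a topology \<Rightarrow> 'g::{zero, topological_space} \<Rightarrow> bool" where
  "G_star_separating X g \<longleftrightarrow>
     (\<forall>F x. closedin X F \<and> x \<in> topspace X - F \<longrightarrow>
        (\<exists>f. continuous_map X euclidean f \<and> f x = g \<and> f ` F \<subseteq> {0}))"

lemma G_star_regular_iff:
  "G_star_regular X TYPE('g::topological_group_add) \<longleftrightarrow> (\<exists>g::'g. g \<noteq> 0 \<and> G_star_separating X g)"
  unfolding G_star_regular_def G_star_separating_def by blast

definition cozero :: "'a topology \<Rightarrow> ('a \<Rightarrow> 'b::zero) \<Rightarrow> 'a set" where
  "cozero X f = {x \<in> topspace X. f x \<noteq> 0}"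

lemma continuous_map_add_monoid:
  fixes f g :: "'a \<Rightarrow> 'g::topological_monoid_add"
  shows "\<lbrakk>continuous_map X euclidean f; continuous_map X euclidean g\<rbrakk>
    \<Longrightarrow> continuous_map X euclidean (\<lambda>x. f x + g x)"
  by (simp add: continuous_map_atin tendsto_add)

lemma continuous_map_sum_list:
  fixes h :: "'b \<Rightarrow> 'a \<Rightarrow> 'g::topological_monoid_add"
  shows "(\<And>z. z \<in> set L \<Longrightarrow> continuous_map X euclidean (h z))
    \<Longrightarrow> continuous_map X euclidean (\<lambda>y. \<Sum>z\<leftarrow>L. h z y)"
  by (induction L) (auto intro: continuous_map_add_monoid)

lemma sum_list_map_eq_single:
  fixes h :: "'b \<Rightarrow> 'g::monoid_add"
  assumes "distinct L" "\<And>z. z \<in> set L \<Longrightarrow> z \<noteq> x \<Longrightarrow> h z = 0"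
  shows "(\<Sum>z\<leftarrow>L. h z) = (if x \<in> set L then h x else 0)"
  using assms by (induction L) (auto, metis add.left_neutral)

lemma sum_list_map_neq_zero:
  fixes h :: "'b \<Rightarrow> 'g::monoid_add"
  shows "(\<Sum>z\<leftarrow>L. h z) \<noteq> 0 \<Longrightarrow> \<exists>z\<in>set L. h z \<noteq> 0"
  by (induction L) auto

subsection \<open>Bump functions at finitely many points\<close>

lemma G_star_separating_bump:
  fixes g :: "'g::topological_monoid_add"
  assumes "t1_space X" "G_star_separating X g" "finite F" "F \<subseteq> topspace X"
    and N: "\<And>x. x \<in> F \<Longrightarrow> openin X (N x) \<and> x \<in> N x"
  obtains f where "continuous_map X euclidean f" "\<And>x. x \<in> F \<Longrightarrow> f x = g"
    "cozero X f \<subseteq> (\<Union>x\<in>F. N x)"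
proof -
  txt \<open>Each bump also vanishes at the other points of \<open>F\<close>, which form a closed set by \<open>T\<^sub>1\<close>.\<close>
  have "\<exists>\<phi>. continuous_map X euclidean \<phi> \<and> \<phi> x = g \<and> \<phi> ` (topspace X - N x \<union> (F - {x})) \<subseteq> {0}"
    if "x \<in> F" for x
  proof -
    have "closedin X (F - {x})"
      using assms(1,3,4) t1_space_closedin_finite by blast
    then have "closedin X (topspace X - N x \<union> (F - {x}))"
      using N[OF that] by blast
    then show ?thesis
      using assms(2,4) N[OF that] that unfolding G_star_separating_def by blast
  qed
  then obtain \<phi> where \<phi>: "\<And>x. x \<in> F \<Longrightarrow> continuous_map X euclidean (\<phi> x) \<and> \<phi> x x = g
      \<and> \<phi> x ` (topspace X - N x \<union> (F - {x})) \<subseteq> {0}"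
    by metis
  obtain L where L: "distinct L" "set L = F"
    using assms(3) finite_distinct_list by blast
  txt \<open>The group need not be commutative, hence a list sum.\<close>
  define f where "f y = (\<Sum>z\<leftarrow>L. \<phi> z y)" for y
  show thesis
  proof
    show "continuous_map X euclidean f"
      unfolding f_def using \<phi> L by (intro continuous_map_sum_list) auto
    show "f x = g" if "x \<in> F" for x
    proof -
      have "\<phi> z x = 0" if "z \<in> set L" "z \<noteq> x" for z
        using \<phi>[of z] that \<open>x \<in> F\<close> L(2) by blast
      then have "f x = \<phi> x x"
        unfolding f_def using sum_list_map_eq_single[OF L(1), of x "\<lambda>z. \<phi> z x"] that L(2) by simp
      then show ?thesis
        using \<phi> that by simp
    qed
    show "cozero X f \<subseteq> (\<Union>x\<in>F. N x)"
    proof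
      fix y assume "y \<in> cozero X f"
      then obtain z where "z \<in> F" "\<phi> z y \<noteq> 0" "y \<in> topspace X"
        unfolding cozero_def f_def using sum_list_map_neq_zero L(2) by blast
      then show "y \<in> (\<Union>x\<in>F. N x)"
        using \<phi>[of z] by blast
    qed
  qed
qed

subsection \<open>Boxes around the points of a finite power\<close>

lemma box_nbhds_finite_subcover:
  assumes opn: "\<forall>U\<in>\<U>. openin (product_topology (\<lambda>_. X) I) U"
    and cov: "topspace (product_topology (\<lambda>_. X) I) \<subseteq> \<Union>\<U>"
    and "finite I" "finite F" "F \<subseteq> topspace X"
  obtains N \<V> where "\<V> \<subseteq> \<U>" "finite \<V>" "\<And>x. x \<in> F \<Longrightarrow> openin X (N x) \<and> x \<in> N x"
    "\<And>q. q \<in> Pi\<^sub>E I (\<lambda>_. F) \<Longrightarrow> Pi\<^sub>E I (\<lambda>i. N (q i)) \<subseteq> \<Union>\<V>"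
proof -
  define P where "P = Pi\<^sub>E I (\<lambda>_. F)"
  have "finite P"
    unfolding P_def using assms(3,4) by (intro finite_PiE) auto
  have "\<exists>U W. U \<in> \<U> \<and> (\<forall>i\<in>I. openin X (W i)) \<and> q \<in> Pi\<^sub>E I W \<and> Pi\<^sub>E I W \<subseteq> U"
    if "q \<in> P" for q
  proof -
    have "q \<in> topspace (product_topology (\<lambda>_. X) I)"
      using that assms(5) unfolding P_def by (auto simp: PiE_iff)
    then obtain U where U: "U \<in> \<U>" "q \<in> U"
      using cov by blast
    then have "openin (product_topology (\<lambda>_. X) I) U"
      using opn by blast
    then obtain W where "(\<forall>i\<in>I. openin X (W i)) \<and> q \<in> Pi\<^sub>E I W \<and> Pi\<^sub>E I W \<subseteq> U"
      using U(2) unfolding openin_product_topology_alt by blast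
    then show ?thesis
      using U(1) by blast
  qed
  then obtain U W where UW: "\<And>q. q \<in> P \<Longrightarrow> U q \<in> \<U> \<and> (\<forall>i\<in>I. openin X (W q i))
      \<and> q \<in> Pi\<^sub>E I (W q) \<and> Pi\<^sub>E I (W q) \<subseteq> U q"
    by metis
  define N where "N x = topspace X \<inter> \<Inter>{W q i |q i. q \<in> P \<and> i \<in> I \<and> q i = x}" for x
  show thesis
  proof
    show "U ` P \<subseteq> \<U>" "finite (U ` P)"
      using UW \<open>finite P\<close> by auto
    show "openin X (N x) \<and> x \<in> N x" if "x \<in> F" for x
    proof
      have "{W q i |q i. q \<in> P \<and> i \<in> I \<and> q i = x} \<subseteq> case_prod W ` (P \<times> I)"
        by blast
      moreover have "finite (case_prod W ` (P \<times> I))"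
        using \<open>finite P\<close> \<open>finite I\<close> by simp
      moreover have "openin X (W q i)" if "q \<in> P" "i \<in> I" for q i
        using UW that by blast
      ultimately show "openin X (N x)"
        unfolding N_def by (intro openin_Int_Inter) (auto dest: finite_subset)
      have "x \<in> W q i" if "q \<in> P" "i \<in> I" "q i = x" for q i
        using UW[OF that(1)] that(2,3) by (auto simp: PiE_iff)
      then show "x \<in> N x"
        unfolding N_def using that assms(5) by blast
    qed
    show "Pi\<^sub>E I (\<lambda>i. N (q i)) \<subseteq> \<Union>(U ` P)" if "q \<in> Pi\<^sub>E I (\<lambda>_. F)" for q
    proof -
      have q: "q \<in> P"
        using that unfolding P_def .
      have "N (q i) \<subseteq> W q i" if "i \<in> I" for i
        unfolding N_def using q that by blast
      then have "Pi\<^sub>E I (\<lambda>i. N (q i)) \<subseteq> U q"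
        using UW[OF q] by (meson PiE_mono order_trans)
      then show ?thesis
        using q by blast
    qed
  qed
qed

subsection \<open>The topology of pointwise convergence\<close>

lemma topspace_Cp:
  "topspace (Cp X :: ('a \<Rightarrow> 'g::topological_space) topology)
     = {f. f \<in> extensional (topspace X) \<and> continuous_map X euclidean f}"
  unfolding Cp_def by (auto simp: PiE_def)

lemma openin_Cp:
  "openin (Cp X) T \<longleftrightarrow>
     (\<exists>T'. openin (product_topology (\<lambda>_. euclidean) (topspace X)) T' \<and> T = T' \<inter> topspace (Cp X))"
proof -
  have "T' \<inter> topspace (Cp X) = T' \<inter> {f. f \<in> extensional (topspace X) \<and> continuous_map X euclidean f}"
    if "openin (product_topology (\<lambda>_. euclidean) (topspace X)) T'" for T'
    using openin_subset[OF that] unfolding Cp_def by auto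
  then show ?thesis
    unfolding Cp_def openin_subtopology by blast
qed

lemma openin_Cp_pointwise:
  fixes V :: "'a \<Rightarrow> 'g::topological_space set"
  assumes "finite E" "E \<subseteq> topspace X" "\<And>y. y \<in> E \<Longrightarrow> open (V y)"
  shows "openin (Cp X) {f \<in> topspace (Cp X). \<forall>y\<in>E. f y \<in> V y}"
proof -
  define W where "W y = (if y \<in> E then V y else UNIV)" for y
  have "{i \<in> topspace X. W i \<noteq> topspace euclidean} \<subseteq> E"
    unfolding W_def by auto
  then have "openin (product_topology (\<lambda>_. euclidean) (topspace X)) (Pi\<^sub>E (topspace X) W)"
    using assms(1,3) unfolding W_def by (auto simp: openin_PiE_gen finite_subset)
  moreover have "{f \<in> topspace (Cp X). \<forall>y\<in>E. f y \<in> V y} = Pi\<^sub>E (topspace X) W \<inter> topspace (Cp X)"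
    using assms(2) unfolding topspace_Cp W_def by (force simp: PiE_iff extensional_def)
  ultimately show ?thesis
    unfolding openin_Cp by blast
qed

lemma in_Cp_closure_ofI:
  fixes h :: "'a \<Rightarrow> 'g::topological_space"
  assumes h: "h \<in> topspace (Cp X)"
    and agree: "\<And>F. finite F \<Longrightarrow> F \<subseteq> topspace X \<Longrightarrow> \<exists>f \<in> A \<inter> topspace (Cp X). \<forall>x\<in>F. f x = h x"
  shows "h \<in> Cp X closure_of A"
  unfolding in_closure_of
proof (intro conjI h allI impI)
  fix T assume T: "h \<in> T \<and> openin (Cp X) T"
  then obtain T' where T': "openin (product_topology (\<lambda>_. euclidean) (topspace X)) T'"
    "T = T' \<inter> topspace (Cp X)"
    unfolding openin_Cp by blast
  then obtain W where W: "finite {i \<in> topspace X. W i \<noteq> UNIV}" "h \<in> Pi\<^sub>E (topspace X) W"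
    "Pi\<^sub>E (topspace X) W \<subseteq> T'"
    using T unfolding openin_product_topology_alt by auto
  obtain f where f: "f \<in> A" "f \<in> topspace (Cp X)" "\<forall>x \<in> {i \<in> topspace X. W i \<noteq> UNIV}. f x = h x"
    using agree[OF W(1)] by blast
  have "f \<in> Pi\<^sub>E (topspace X) W"
    using f(2,3) W(2) unfolding topspace_Cp by (auto simp: PiE_iff)
  then show "\<exists>y. y \<in> A \<and> y \<in> T"
    using f(1,2) T'(2) W(3) by blast
qed

subsection \<open>Cozero sets of functions close to a nonzero constant\<close>

lemma PiE_UN_subset_UN_PiE:
  "Pi\<^sub>E I (\<lambda>_. \<Union>x\<in>F. N x) \<subseteq> (\<Union>q\<in>Pi\<^sub>E I (\<lambda>_. F). Pi\<^sub>E I (\<lambda>i. N (q i)))"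
proof
  fix p assume p: "p \<in> Pi\<^sub>E I (\<lambda>_. \<Union>x\<in>F. N x)"
  define q where "q = restrict (\<lambda>i. SOME x. x \<in> F \<and> p i \<in> N x) I"
  have "q i \<in> F \<and> p i \<in> N (q i)" if "i \<in> I" for i
  proof -
    have "\<exists>x. x \<in> F \<and> p i \<in> N x"
      using p that by (auto simp: PiE_iff)
    from someI_ex[OF this] show ?thesis
      unfolding q_def using that by simp
  qed
  then have "q \<in> Pi\<^sub>E I (\<lambda>_. F)" "p \<in> Pi\<^sub>E I (\<lambda>i. N (q i))"
    using p unfolding q_def by (auto simp: PiE_iff)
  then show "p \<in> (\<Union>q\<in>Pi\<^sub>E I (\<lambda>_. F). Pi\<^sub>E I (\<lambda>i. N (q i)))"
    by blast
qed

lemma constant_in_Cp_closure_of_cozero_covered: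
  fixes g :: "'g::topological_monoid_add"
  assumes "t1_space X" "G_star_separating X g"
    and opn: "\<forall>U\<in>\<U>. openin (product_topology (\<lambda>_. X) I) U"
    and cov: "topspace (product_topology (\<lambda>_. X) I) \<subseteq> \<Union>\<U>"
    and "finite I"
  shows "restrict (\<lambda>_. g) (topspace X) \<in> Cp X closure_of
    {f \<in> topspace (Cp X). \<exists>\<V>. \<V> \<subseteq> \<U> \<and> finite \<V> \<and> Pi\<^sub>E I (\<lambda>_. cozero X f) \<subseteq> \<Union>\<V>}"
proof (rule in_Cp_closure_ofI)
  show "restrict (\<lambda>_. g) (topspace X) \<in> topspace (Cp X)"
    unfolding topspace_Cp by (auto intro: continuous_map_eq[OF continuous_map_const[THEN iffD2]])
  fix F assume F: "finite F" "F \<subseteq> topspace X"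
  obtain N \<V> where \<V>: "\<V> \<subseteq> \<U>" "finite \<V>" and N: "\<And>x. x \<in> F \<Longrightarrow> openin X (N x) \<and> x \<in> N x"
    and box: "\<And>q. q \<in> Pi\<^sub>E I (\<lambda>_. F) \<Longrightarrow> Pi\<^sub>E I (\<lambda>i. N (q i)) \<subseteq> \<Union>\<V>"
    using box_nbhds_finite_subcover[OF opn cov \<open>finite I\<close> F] by metis
  obtain f where f: "continuous_map X euclidean f" "\<And>x. x \<in> F \<Longrightarrow> f x = g"
    "cozero X f \<subseteq> (\<Union>x\<in>F. N x)"
    using G_star_separating_bump[OF assms(1,2) F N] by metis
  define f' where "f' = restrict f (topspace X)"
  have f'_Cp: "f' \<in> topspace (Cp X)"
    unfolding f'_def topspace_Cp using f(1) by (auto intro: continuous_map_eq)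
  have "cozero X f' = cozero X f"
    unfolding cozero_def f'_def by auto
  then have "Pi\<^sub>E I (\<lambda>_. cozero X f') \<subseteq> Pi\<^sub>E I (\<lambda>_. \<Union>x\<in>F. N x)"
    using f(3) by (intro PiE_mono) simp
  also have "\<dots> \<subseteq> (\<Union>q\<in>Pi\<^sub>E I (\<lambda>_. F). Pi\<^sub>E I (\<lambda>i. N (q i)))"
    by (rule PiE_UN_subset_UN_PiE)
  also have "\<dots> \<subseteq> \<Union>\<V>"
    using box by (rule UN_least)
  finally have "Pi\<^sub>E I (\<lambda>_. cozero X f') \<subseteq> \<Union>\<V>" .
  moreover have "\<forall>x\<in>F. f' x = restrict (\<lambda>_. g) (topspace X) x"
    unfolding f'_def using f(2) F(2) by auto
  ultimately show "\<exists>f\<in>{f \<in> topspace (Cp X). \<exists>\<V>. \<V> \<subseteq> \<U> \<and> finite \<V> \<and> Pi\<^sub>E I (\<lambda>_. cozero X f) \<subseteq> \<Union>\<V>}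
      \<inter> topspace (Cp X). \<forall>x\<in>F. f x = restrict (\<lambda>_. g) (topspace X) x"
    using \<V> f'_Cp by blast
qed

lemma cozero_powers_cover_of_Cp_closure:
  fixes g :: "'g::{zero, t1_space}"
  assumes "g \<noteq> 0" "finite I" "restrict (\<lambda>_. g) (topspace X) \<in> Cp X closure_of B"
  shows "topspace (product_topology (\<lambda>_. X) I) \<subseteq> (\<Union>f\<in>B. Pi\<^sub>E I (\<lambda>_. cozero X f))"
proof
  fix p assume p: "p \<in> topspace (product_topology (\<lambda>_. X) I)"
  then have pX: "p ` I \<subseteq> topspace X"
    by (auto simp: PiE_iff)
  define V where "V = {f \<in> topspace (Cp X). \<forall>y\<in>p ` I. f y \<in> - {0::'g}}"
  have "openin (Cp X) V"
    unfolding V_def using assms(2) pX by (intro openin_Cp_pointwise) (auto intro!: open_Compl)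
  moreover have "restrict (\<lambda>_. g) (topspace X) \<in> topspace (Cp X)"
    using closure_of_subset_topspace assms(3) by (rule subsetD)
  then have "restrict (\<lambda>_. g) (topspace X) \<in> V"
    unfolding V_def using assms(1) pX by auto
  ultimately obtain f where f: "f \<in> B" "f \<in> V"
    using assms(3) unfolding in_closure_of by blast
  have "p i \<in> cozero X f" if "i \<in> I" for i
    using f(2) pX that unfolding V_def cozero_def by auto
  then have "p \<in> Pi\<^sub>E I (\<lambda>_. cozero X f)"
    using p by (simp add: PiE_iff)
  then show "p \<in> (\<Union>f\<in>B. Pi\<^sub>E I (\<lambda>_. cozero X f))"
    using f(1) by blast
qed

lemma card_of_UN_finite_ordLeq_infinite:
  assumes "infinite K" "(card_of B, card_of K) \<in> ordLeq" "\<And>b. b \<in> B \<Longrightarrow> finite (V b)"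
  shows "(card_of (\<Union>b\<in>B. V b), card_of K) \<in> ordLeq"
  using assms by (intro card_of_UNION_ordLeq_infinite) (auto intro: ordLeq3_finite_infinite)

lemma subcover_of_cozero_covered_Cp_closure:
  fixes g :: "'g::{zero, t1_space}"
  assumes "g \<noteq> 0" "finite I" "infinite K" "(card_of B, card_of K) \<in> ordLeq"
    and g: "restrict (\<lambda>_. g) (topspace X) \<in> Cp X closure_of B"
    and covered: "\<forall>f\<in>B. \<exists>\<V>. \<V> \<subseteq> \<U> \<and> finite \<V> \<and> Pi\<^sub>E I (\<lambda>_. cozero X f) \<subseteq> \<Union>\<V>"
  shows "\<exists>\<V>. \<V> \<subseteq> \<U> \<and> (card_of \<V>, card_of K) \<in> ordLeq
    \<and> topspace (product_topology (\<lambda>_. X) I) \<subseteq> \<Union>\<V>"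
proof -
  obtain \<V> where \<V>: "\<And>f. f \<in> B \<Longrightarrow>
      \<V> f \<subseteq> \<U> \<and> finite (\<V> f) \<and> Pi\<^sub>E I (\<lambda>_. cozero X f) \<subseteq> \<Union>(\<V> f)"
    using covered by (rule bchoice[THEN exE]) blast
  have "topspace (product_topology (\<lambda>_. X) I) \<subseteq> (\<Union>f\<in>B. Pi\<^sub>E I (\<lambda>_. cozero X f))"
    using assms(1,2) g by (rule cozero_powers_cover_of_Cp_closure)
  also have "\<dots> \<subseteq> \<Union>(\<Union>f\<in>B. \<V> f)"
  proof (rule UN_least)
    fix f assume "f \<in> B"
    then have "Pi\<^sub>E I (\<lambda>_. cozero X f) \<subseteq> \<Union>(\<V> f)"
      using \<V> by blast
    also have "\<dots> \<subseteq> \<Union>(\<Union>f\<in>B. \<V> f)"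
      using \<open>f \<in> B\<close> by blast
    finally show "Pi\<^sub>E I (\<lambda>_. cozero X f) \<subseteq> \<Union>(\<Union>f\<in>B. \<V> f)" .
  qed
  moreover have "(\<Union>f\<in>B. \<V> f) \<subseteq> \<U>"
    using \<V> by (intro UN_least) blast
  moreover have "(card_of (\<Union>f\<in>B. \<V> f), card_of K) \<in> ordLeq"
    using \<V> by (intro card_of_UN_finite_ordLeq_infinite[OF assms(3,4)]) blast
  ultimately show ?thesis
    by blast
qed

theorem lindelof_le_finite_power_if_tightness_le_Cp:
  fixes X :: "'a topology" and K :: "'k set"
  assumes "t1_space X"
    and "G_star_regular X TYPE('g::{topological_group_add, t1_space})"
    and "infinite K"
    and tightness: "tightness_le (Cp X :: ('a \<Rightarrow> 'g) topology) K"
    and "finite I"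
  shows "lindelof_le (product_topology (\<lambda>_. X) I) K"
  unfolding lindelof_le_def
proof (intro allI impI)
  obtain g :: 'g where g: "g \<noteq> 0" "G_star_separating X g"
    using assms(2) G_star_regular_iff by blast
  fix \<U> assume \<U>: "(\<forall>U\<in>\<U>. openin (product_topology (\<lambda>_. X) I) U)
      \<and> topspace (product_topology (\<lambda>_. X) I) \<subseteq> \<Union>\<U>"
  define A where "A = {f \<in> topspace (Cp X :: ('a \<Rightarrow> 'g) topology).
      \<exists>\<V>. \<V> \<subseteq> \<U> \<and> finite \<V> \<and> Pi\<^sub>E I (\<lambda>_. cozero X f) \<subseteq> \<Union>\<V>}"
  have "restrict (\<lambda>_. g) (topspace X) \<in> Cp X closure_of A"
    unfolding A_def using assms(1) g(2) conjunct1[OF \<U>] conjunct2[OF \<U>] \<open>finite I\<close>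
    by (rule constant_in_Cp_closure_of_cozero_covered)
  moreover have "A \<subseteq> topspace (Cp X)"
    unfolding A_def by (rule Collect_subset)
  ultimately obtain B where B: "B \<subseteq> A" "(card_of B, card_of K) \<in> ordLeq"
      "restrict (\<lambda>_. g) (topspace X) \<in> Cp X closure_of B"
    using tightness unfolding tightness_le_def by blast
  have "\<forall>f\<in>B. \<exists>\<V>. \<V> \<subseteq> \<U> \<and> finite \<V> \<and> Pi\<^sub>E I (\<lambda>_. cozero X f) \<subseteq> \<Union>\<V>"
    using B(1) unfolding A_def by blast
  then show "\<exists>\<V>. \<V> \<subseteq> \<U> \<and> (card_of \<V>, card_of K) \<in> ordLeq
      \<and> topspace (product_topology (\<lambda>_. X) I) \<subseteq> \<Union>\<V>"
    using g(1) \<open>finite I\<close> assms(3) B(2,3) by (intro subcover_of_cozero_covered_Cp_closure)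
qed

theorem lemma7p3:
  fixes X :: "'a topology" and K :: "'k set"
  assumes "tychonoff_space X"
    and "G_star_regular X TYPE('g::{topological_group_add, t2_space})"
    and "infinite K"
    and "tightness_le (Cp X :: ('a \<Rightarrow> 'g) topology) K"
  shows "\<forall>n::nat. n \<ge> 1 \<longrightarrow> lindelof_le (product_topology (\<lambda>_. X) {..<n}) K"
proof (intro allI impI)
  fix n :: nat
  have "t1_space X"
    using assms(1) Hausdorff_imp_t1_space unfolding tychonoff_space_def by blast
  then show "lindelof_le (product_topology (\<lambda>_. X) {..<n}) K"
    using assms(2-4) by (rule lindelof_le_finite_power_if_tightness_le_Cp) simp
qed

end
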